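(* Let $G=(\mathfrak{N},\mathfrak{T},\mathfrak{R},\mathfrak{S})$ be a context-free grammar, $\Sigma$ a set of characters and $(\textsl{Lex},\textsl{Sel})$ a local lexing. For every input $D\in\Sigma^*$, every $k\in\{0,\ldots,|D|\}$ and every $u\in\{0,1,2,\ldots\}$: if $p,q\in\mathcal{P}_k^u$ and there is $n\in\{0,\ldots,|q|\}$ with $|\overline{p}|=|\overline{q_0\ldots q_{n-1}}|\le k$ and $[p\,q_n\ldots q_{|q|-1}]\in\mathcal{L}_{\text{prefix}}$, then $p\,q_n\ldots q_{|q|-1}\in\mathcal{P}_k^u$.
   Context: Notation: for a set $U$, $U^*$ is the set of finite sequences over $U$, $\varepsilon$ the empty sequence, juxtaposition is concatenation, $|\alpha|$ the length and $\alpha_i$ ($0\le i<|\alpha|$) the $i$-th element. A context-free grammar $(\mathfrak{N},\mathfrak{T},\mathfrak{R},\mathfrak{S})$ has disjoint nonterminals $\mathfrak{N}$ and terminals $\mathfrak{T}$, rules $\mathfrak{R}\subseteq\mathfrak{N}\times(\mathfrak{N}\cup\mathfrak{T})^*$ (written $N\rightarrow\alpha$), start symbol $\mathfrak{S}$; $\overset{*}{\Rightarrow}$ is the reflexive-transitive closure of one-step rewriting by rules. $\mathcal{L}_{\text{prefix}}=\{w\in\mathfrak{T}^*\mid\exists\alpha\in(\mathfrak{N}\cup\mathfrak{T})^*.\ \mathfrak{S}\overset{*}{\Rightarrow}w\alpha\}$. Tokens: a token is a pair $x=(t,c)\in\mathfrak{T}\times\Sigma^*$; $[x]=t$, $\overline{x}=c$.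 For a token sequence (path) $q=x_0\ldots x_r$, $[q]=[x_0]\ldots[x_r]$ and $\overline{q}=\overline{x_0}\ldots\overline{x_r}$. Local lexing: a pair $(\textsl{Lex},\textsl{Sel})$ where $\textsl{Lex}$ assigns to each $t\in\mathfrak{T}$ a function $\textsl{Lex}(t)$ which, given $D\in\Sigma^*$ and $k\in\{0,\ldots,|D|\}$, returns a set of tokens $(t,c)$ with $k+|c|\le|D|$ and $c_i=D_{k+i}$ for $0\le i\le|c|-1$; and $\textsl{Sel}$ maps any two token sets $A\subseteq B$ to a token set with $A\subseteq\textsl{Sel}(A,B)\subseteq B$. Path sets: $\operatorname{limit} f\,X=\bigcup_{n\ge0}f^n(X)$. $\operatorname{Append}_k\,T\,P=P\cup\{pt\mid p\in P,\ |\overline{p}|=k,\ t\in T,\ [pt]\in\mathcal{L}_{\text{prefix}}\}$. For $k\in\{0,\ldots,|D|\}$: $\mathcal{X}_k=\{x\in\mathfrak{T}\times\Sigma^*\mid x\in\textsl{Lex}([x])(D,k)\}$; $\mathcal{P}_0^0=\{\varepsilon\}$; $\mathcal{W}_k^u=\{x\in\mathcal{X}_k\mid\exists p\in\mathcal{P}_k^u.\ |\overline{p}|=k\wedge[px]\in\mathcal{L}_{\text{prefix}}\}$; $\mathcal{Z}_k^0=\emptyset$; $\mathcal{Z}_k^{u+1}=\textsl{Sel}(\mathcal{Z}_k^u,\mathcal{W}_k^u)$; $\mathcal{P}_k^{u+1}=\operatorname{limit}(\operatorname{Append}_k\,\mathcal{Z}_k^{u+1})\,\mathcal{P}_k^u$;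 $\mathcal{P}_k^\infty=\bigcup_u\mathcal{P}_k^u$; $\mathcal{P}_{k+1}^0=\mathcal{P}_k^\infty$. *)

theory Defs
  imports Main
begin

text \<open>Grammar symbols: nonterminals of type 'n (Inl), terminals of type 't (Inr);
  the disjoint sets N and T are represented by the types 'n and 't.
  A grammar is given by its rule set R and start symbol S.\<close>

type_synonym ('n, 't) sym = "'n + 't"
type_synonym ('n, 't) rules = "('n \<times> ('n, 't) sym list) set"

definition derives1 :: "('n, 't) rules \<Rightarrow> ('n, 't) sym list \<Rightarrow> ('n, 't) sym list \<Rightarrow> bool" where
  "derives1 R u v \<longleftrightarrow>
     (\<exists>\<alpha> N \<gamma> \<beta>. u = \<alpha> @ [Inl N] @ \<beta> \<and> v = \<alpha> @ \<gamma> @ \<beta> \<and> (N, \<gamma>) \<in> R)"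

definition derives :: "('n, 't) rules \<Rightarrow> ('n, 't) sym list \<Rightarrow> ('n, 't) sym list \<Rightarrow> bool" where
  "derives R = (derives1 R)\<^sup>*\<^sup>*"

definition Lprefix :: "('n, 't) rules \<Rightarrow> 'n \<Rightarrow> 't list set" where
  "Lprefix R S = {w. \<exists>\<alpha>. derives R [Inl S] (map Inr w @ \<alpha>)}"

type_synonym ('t, 'c) token = "'t \<times> 'c list"
type_synonym ('t, 'c) path = "('t, 'c) token list"

definition terms :: "('t, 'c) path \<Rightarrow> 't list" where
  "terms p = map fst p"

definition chars :: "('t, 'c) path \<Rightarrow> 'c list" where
  "chars p = concat (map snd p)"

type_synonym ('t, 'c) lexer = "'t \<Rightarrow> 'c list \<Rightarrow> nat \<Rightarrow> ('t, 'c) token set"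
type_synonym ('t, 'c) selector = "('t, 'c) token set \<Rightarrow> ('t, 'c) token set \<Rightarrow> ('t, 'c) token set"

definition local_lexing :: "('t, 'c) lexer \<Rightarrow> ('t, 'c) selector \<Rightarrow> bool" where
  "local_lexing Lex Sel \<longleftrightarrow>
     (\<forall>t D k. k \<le> length D \<longrightarrow>
        (\<forall>x \<in> Lex t D k. fst x = t \<and> k + length (snd x) \<le> length D \<and>
           (\<forall>i < length (snd x). snd x ! i = D ! (k + i)))) \<and>
     (\<forall>A B. A \<subseteq> B \<longrightarrow> A \<subseteq> Sel A B \<and> Sel A B \<subseteq> B)"

definition limit_set :: "('a set \<Rightarrow> 'a set) \<Rightarrow> 'a set \<Rightarrow> 'a set" where
  "limit_set f X = (\<Union>n. (f ^^ n) X)"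

definition Append :: "('n, 't) rules \<Rightarrow> 'n \<Rightarrow> nat \<Rightarrow> ('t, 'c) token set
                      \<Rightarrow> ('t, 'c) path set \<Rightarrow> ('t, 'c) path set" where
  "Append R S k T P = P \<union> {p @ [t] | p t. p \<in> P \<and> length (chars p) = k \<and> t \<in> T
                                   \<and> terms (p @ [t]) \<in> Lprefix R S}"

definition Xk :: "('t, 'c) lexer \<Rightarrow> 'c list \<Rightarrow> nat \<Rightarrow> ('t, 'c) token set" where
  "Xk Lex D k = {x. x \<in> Lex (fst x) D k}"

definition Wk :: "('n, 't) rules \<Rightarrow> 'n \<Rightarrow> ('t, 'c) lexer \<Rightarrow> 'c list \<Rightarrow> nat
                  \<Rightarrow> ('t, 'c) path set \<Rightarrow> ('t, 'c) token set" where
  "Wk R S Lex D k P = {x \<in> Xk Lex D k. \<exists>p \<in> P. length (chars p) = k \<and> terms (p @ [x]) \<in> Lprefix R S}"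

text \<open>iterZP \<dots> k P0 u = (Z_k^u, P_k^u) where P0 = P_k^0.\<close>

primrec iterZP :: "('n, 't) rules \<Rightarrow> 'n \<Rightarrow> ('t, 'c) lexer \<Rightarrow> ('t, 'c) selector \<Rightarrow> 'c list
                   \<Rightarrow> nat \<Rightarrow> ('t, 'c) path set \<Rightarrow> nat \<Rightarrow> ('t, 'c) token set \<times> ('t, 'c) path set" where
  "iterZP R S Lex Sel D k P0 0 = ({}, P0)"
| "iterZP R S Lex Sel D k P0 (Suc u) =
     (let Z = fst (iterZP R S Lex Sel D k P0 u);
          P = snd (iterZP R S Lex Sel D k P0 u);
          Z' = Sel Z (Wk R S Lex D k P)
      in (Z', limit_set (Append R S k Z') P))"

text \<open>Pinit \<dots> k = P_k^0.\<close>

primrec Pinit :: "('n, 't) rules \<Rightarrow> 'n \<Rightarrow> ('t, 'c) lexer \<Rightarrow> ('t, 'c) selector \<Rightarrow> 'c list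
                  \<Rightarrow> nat \<Rightarrow> ('t, 'c) path set" where
  "Pinit R S Lex Sel D 0 = {[]}"
| "Pinit R S Lex Sel D (Suc k) =
     (\<Union>u. snd (iterZP R S Lex Sel D k (Pinit R S Lex Sel D k) u))"

definition \<P> :: "('n, 't) rules \<Rightarrow> 'n \<Rightarrow> ('t, 'c) lexer \<Rightarrow> ('t, 'c) selector \<Rightarrow> 'c list
               \<Rightarrow> nat \<Rightarrow> nat \<Rightarrow> ('t, 'c) path set" where
  "\<P> R S Lex Sel D k u = snd (iterZP R S Lex Sel D k (Pinit R S Lex Sel D k) u)"

end

theory Submission
  imports Defs
begin

text \<open>Every token of a path in \<open>\<P>\<^sub>k\<^sup>u\<close> was selected at the character position where it occurs,
  i.e. it lies in some \<open>\<Z>\<^sub>j\<^sup>v\<close> with \<open>j\<close> the length of the characters before it (and \<open>v = u\<close>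
  when \<open>j = k\<close>). Conversely, since the sets \<open>\<Z>\<close> and \<open>\<P>\<close> only grow, and a path of length
  \<open>j < k\<close> in \<open>\<P>\<^sub>k\<^sup>u\<close> already lies in some \<open>\<P>\<^sub>j\<^sup>v\<close>, any such selected token may be
  appended again to any path of \<open>\<P>\<^sub>k\<^sup>u\<close> ending at that position, as long as the terminals
  stay in \<open>Lprefix R S\<close>. Grafting the tail of \<open>q\<close> onto \<open>p\<close> token by token proves the claim.\<close>

lemma Lprefix_appendD: "w @ w' \<in> Lprefix R S \<Longrightarrow> w \<in> Lprefix R S"
  unfolding Lprefix_def by (auto intro: exI[of _ "map Inr w' @ _"])

lemma chars_append [simp]: "chars (p @ q) = chars p @ chars q"
  by (simp add: chars_def)

lemma subset_limit_set: "X \<subseteq> limit_set f X"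
  unfolding limit_set_def by (auto intro: UN_I[of 0])

lemma limit_set_Append_snoc:
  assumes "x \<in> limit_set (Append R S k T) X" "length (chars x) = k" "t \<in> T"
    and "terms (x @ [t]) \<in> Lprefix R S"
  shows "x @ [t] \<in> limit_set (Append R S k T) X"
proof -
  obtain n where "x \<in> (Append R S k T ^^ n) X"
    using assms(1) unfolding limit_set_def by blast
  then have "x @ [t] \<in> Append R S k T ((Append R S k T ^^ n) X)"
    using assms(2-4) unfolding Append_def by blast
  then have "x @ [t] \<in> (Append R S k T ^^ Suc n) X"
    by simp
  then show ?thesis
    unfolding limit_set_def by blast
qed

lemma limit_set_Append_induct:
  assumes "x \<in> limit_set (Append R S k T) X"
    and "\<And>x. x \<in> X \<Longrightarrow> Q x"
    and "\<And>p t. Q p \<Longrightarrow> length (chars p) = k \<Longrightarrow> t \<in> T \<Longrightarrow> Q (p @ [t])"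
  shows "Q x"
proof -
  obtain n where "x \<in> (Append R S k T ^^ n) X"
    using assms(1) unfolding limit_set_def by blast
  moreover have "\<forall>y \<in> (Append R S k T ^^ n) X. Q y"
    by (induction n) (use assms(2,3) in \<open>auto simp: Append_def\<close>)
  ultimately show ?thesis
    by blast
qed

lemma Wk_mono: "P \<subseteq> P' \<Longrightarrow> Wk R S Lex D k P \<subseteq> Wk R S Lex D k P'"
  unfolding Wk_def by blast

lemma local_lexing_Sel_bounds:
  "local_lexing Lex Sel \<Longrightarrow> A \<subseteq> B \<Longrightarrow> A \<subseteq> Sel A B \<and> Sel A B \<subseteq> B"
  unfolding local_lexing_def by blast

context
  fixes R :: "('n, 't) rules" and S :: 'n
    and Lex :: "('t, 'c) lexer" and Sel :: "('t, 'c) selector"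
    and D :: "'c list"
begin

definition Zk :: "nat \<Rightarrow> nat \<Rightarrow> ('t, 'c) token set" where
  "Zk k u = fst (iterZP R S Lex Sel D k (Pinit R S Lex Sel D k) u)"

abbreviation Pk :: "nat \<Rightarrow> nat \<Rightarrow> ('t, 'c) path set" where
  "Pk k u \<equiv> \<P> R S Lex Sel D k u"

lemma Zk_0: "Zk k 0 = {}"
  by (simp add: Zk_def)

lemma Pk_0: "Pk k 0 = Pinit R S Lex Sel D k"
  by (simp add: \<P>_def)

lemma Zk_Suc: "Zk k (Suc u) = Sel (Zk k u) (Wk R S Lex D k (Pk k u))"
  by (simp add: Zk_def \<P>_def Let_def)

lemma Pk_Suc: "Pk k (Suc u) = limit_set (Append R S k (Zk k (Suc u))) (Pk k u)"
  by (simp add: Zk_def \<P>_def Let_def)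

lemma Pk_mono: "u \<le> v \<Longrightarrow> Pk k u \<subseteq> Pk k v"
  by (rule lift_Suc_mono_le[of "Pk k"]) (auto simp: Pk_Suc intro: subset_limit_set[THEN subsetD])

lemma Pk_subset_Pinit_Suc: "Pk k u \<subseteq> Pinit R S Lex Sel D (Suc k)"
  by (auto simp: \<P>_def)

lemma Pk_mono_stage:
  assumes "j < k"
  shows "Pk j v \<subseteq> Pk k u"
proof -
  have "Pinit R S Lex Sel D i \<subseteq> Pinit R S Lex Sel D (Suc i)" for i
    using Pk_0[of i] Pk_subset_Pinit_Suc[of i 0] by simp
  then have "Pinit R S Lex Sel D (Suc j) \<subseteq> Pinit R S Lex Sel D k"
    by (rule lift_Suc_mono_le) (use assms in simp)
  moreover have "Pinit R S Lex Sel D k \<subseteq> Pk k u"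
    by (metis Pk_0 Pk_mono zero_le)
  ultimately show ?thesis
    using Pk_subset_Pinit_Suc[of j v] by blast
qed

text \<open>Stage \<open>k\<close> only appends tokens to paths covering exactly \<open>k\<close> characters, so it adds
  no path covering fewer.\<close>

lemma Pk_short_in_Pinit:
  "x \<in> Pk k u \<Longrightarrow> length (chars x) < k \<Longrightarrow> x \<in> Pinit R S Lex Sel D k"
proof (induction u arbitrary: x)
  case 0
  then show ?case by (simp add: Pk_0)
next
  case (Suc u)
  have "length (chars x) < k \<longrightarrow> x \<in> Pinit R S Lex Sel D k"
    by (rule limit_set_Append_induct[OF Suc.prems(1)[unfolded Pk_Suc]]) (use Suc.IH in auto)
  then show ?case
    using Suc.prems by blast
qed

lemma Pk_short_in_own_stage:
  "x \<in> Pk k u \<Longrightarrow> length (chars x) < k \<Longrightarrow> \<exists>v. x \<in> Pk (length (chars x)) v"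
proof (induction k arbitrary: u)
  case 0
  then show ?case by simp
next
  case (Suc k)
  obtain v where "x \<in> Pk k v"
    using Pk_short_in_Pinit[OF Suc.prems] by (auto simp: \<P>_def)
  then show ?case
    using Suc.IH Suc.prems(2) by (cases "length (chars x) = k") auto
qed

definition admissible :: "nat \<Rightarrow> nat \<Rightarrow> nat \<Rightarrow> ('t, 'c) token \<Rightarrow> bool" where
  "admissible k u j t \<longleftrightarrow> (j < k \<and> (\<exists>v. t \<in> Zk j v)) \<or> (j = k \<and> t \<in> Zk k u)"

definition admissible_path :: "nat \<Rightarrow> nat \<Rightarrow> ('t, 'c) path \<Rightarrow> bool" where
  "admissible_path k u q \<longleftrightarrow> (\<forall>i < length q. admissible k u (length (chars (take i q))) (q ! i))"

lemma admissible_path_snoc: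
  assumes "admissible_path k u p" "admissible k u (length (chars p)) t"
  shows "admissible_path k u (p @ [t])"
  unfolding admissible_path_def
proof (intro allI impI)
  fix i
  assume "i < length (p @ [t])"
  then consider "i < length p" | "i = length p"
    by fastforce
  then show "admissible k u (length (chars (take i (p @ [t])))) ((p @ [t]) ! i)"
    by cases (use assms in \<open>auto simp: admissible_path_def nth_append\<close>)
qed

context
  assumes LL: "local_lexing Lex Sel"
begin

lemma Zk_subset_Wk: "Zk k u \<subseteq> Wk R S Lex D k (Pk k u)"
proof (induction u)
  case 0
  then show ?case by (simp add: Zk_0)
next
  case (Suc u)
  have "Zk k (Suc u) \<subseteq> Wk R S Lex D k (Pk k u)"
    using local_lexing_Sel_bounds[OF LL Suc] by (simp add: Zk_Suc)
  also have "\<dots> \<subseteq> Wk R S Lex D k (Pk k (Suc u))"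
    by (rule Wk_mono[OF Pk_mono]) simp
  finally show ?case .
qed

lemma Zk_mono: "u \<le> v \<Longrightarrow> Zk k u \<subseteq> Zk k v"
  by (rule lift_Suc_mono_le[of "Zk k"])
     (use local_lexing_Sel_bounds[OF LL Zk_subset_Wk] in \<open>simp_all add: Zk_Suc\<close>)

lemma admissible_mono: "u \<le> v \<Longrightarrow> admissible k u j t \<Longrightarrow> admissible k v j t"
  using Zk_mono unfolding admissible_def by blast

text \<open>The induction on \<open>u\<close> is started from \<open>admissible_path k 0\<close>, which (as \<open>Zk k 0 = {}\<close>)
  only admits tokens at positions below \<open>k\<close>.\<close>

lemma admissible_path_Pk_from_Pinit:
  assumes "\<And>q. q \<in> Pinit R S Lex Sel D k \<Longrightarrow> admissible_path k 0 q" "q \<in> Pk k u"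
  shows "admissible_path k u q"
  using assms(2)
proof (induction u arbitrary: q)
  case 0
  then show ?case by (simp add: Pk_0 assms(1))
next
  case (Suc u)
  show ?case
  proof (rule limit_set_Append_induct[OF Suc.prems[unfolded Pk_Suc]])
    fix x
    assume "x \<in> Pk k u"
    then show "admissible_path k (Suc u) x"
      using Suc.IH admissible_mono[of u "Suc u"] by (auto simp: admissible_path_def)
  next
    fix p t
    assume "admissible_path k (Suc u) p" "length (chars p) = k" "t \<in> Zk k (Suc u)"
    then show "admissible_path k (Suc u) (p @ [t])"
      by (auto simp: admissible_def intro: admissible_path_snoc)
  qed
qed

lemma admissible_path_Pk: "q \<in> Pk k u \<Longrightarrow> admissible_path k u q"
proof (induction k arbitrary: u q)
  case 0
  have "admissible_path 0 0 q'" if "q' \<in> Pinit R S Lex Sel D 0" for q'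
    using that by (simp add: admissible_path_def)
  then show ?case
    using "0" by (rule admissible_path_Pk_from_Pinit)
next
  case (Suc k)
  have "admissible_path (Suc k) 0 q'" if q': "q' \<in> Pinit R S Lex Sel D (Suc k)" for q'
  proof -
    obtain v where "q' \<in> Pk k v"
      using q' by (auto simp: \<P>_def)
    then have "admissible_path k v q'"
      by (rule Suc.IH)
    moreover have "admissible k v j t \<Longrightarrow> admissible (Suc k) 0 j t" for j t
      by (auto simp: admissible_def)
    ultimately show ?thesis
      by (simp add: admissible_path_def)
  qed
  then show ?case
    using Suc.prems by (rule admissible_path_Pk_from_Pinit)
qed

lemma Pk_snoc_admissible:
  assumes "x \<in> Pk k u" "admissible k u (length (chars x)) t"
    and "terms (x @ [t]) \<in> Lprefix R S"
  shows "x @ [t] \<in> Pk k u"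
proof (cases "length (chars x) < k")
  case True
  define j where "j = length (chars x)"
  obtain v v' where "t \<in> Zk j v" "x \<in> Pk j v'"
    using assms(2) Pk_short_in_own_stage[OF assms(1) True] by (auto simp: admissible_def j_def)
  moreover have "v \<le> Suc (max v v')" "v' \<le> Suc (max v v')"
    by simp_all
  ultimately have t: "t \<in> Zk j (Suc (max v v'))" and x: "x \<in> Pk j (Suc (max v v'))"
    using Zk_mono Pk_mono by (meson subsetD)+
  have "x @ [t] \<in> Pk j (Suc (max v v'))"
    unfolding Pk_Suc
    by (rule limit_set_Append_snoc[OF x[unfolded Pk_Suc] _ t assms(3)]) (simp add: j_def)
  then show ?thesis
    using Pk_mono_stage[OF True[folded j_def]] by blast
next
  case False
  then have "length (chars x) = k" "t \<in> Zk k u"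
    using assms(2) by (auto simp: admissible_def)
  moreover obtain u' where "u = Suc u'"
    using \<open>t \<in> Zk k u\<close> Zk_0 by (cases u) auto
  ultimately show ?thesis
    using limit_set_Append_snoc assms(1,3) by (simp add: Pk_Suc)
qed

lemma Pk_append_admissible:
  assumes "x \<in> Pk k u"
    and "\<forall>i < length ys. admissible k u (length (chars (x @ take i ys))) (ys ! i)"
    and "terms (x @ ys) \<in> Lprefix R S"
  shows "x @ ys \<in> Pk k u"
  using assms(2,3)
proof (induction ys rule: rev_induct)
  case Nil
  then show ?case using assms(1) by simp
next
  case (snoc y ys)
  have "\<forall>i < length ys. admissible k u (length (chars (x @ take i ys))) (ys ! i)"
  proof (intro allI impI)
    fix i
    assume "i < length ys"
    then show "admissible k u (length (chars (x @ take i ys))) (ys ! i)"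
      using snoc.prems(1)[rule_format, of i] by (simp add: nth_append)
  qed
  moreover have "terms (x @ ys) \<in> Lprefix R S"
    using snoc.prems(2) Lprefix_appendD[of "terms (x @ ys)"] by (simp add: terms_def)
  ultimately have "x @ ys \<in> Pk k u"
    by (rule snoc.IH)
  moreover have "admissible k u (length (chars (x @ ys))) y"
    using snoc.prems(1)[rule_format, of "length ys"] by simp
  ultimately show ?case
    using Pk_snoc_admissible snoc.prems(2) by (metis append_assoc)
qed

end

end

theorem theorem3:
  fixes R :: "('n, 't) rules" and S :: 'n
    and Lex :: "('t, 'c) lexer" and Sel :: "('t, 'c) selector"
    and D :: "'c list" and k u n :: nat and p q :: "('t, 'c) path"
  assumes "local_lexing Lex Sel"
    and "k \<le> length D"
    and "p \<in> \<P> R S Lex Sel D k u"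
    and "q \<in> \<P> R S Lex Sel D k u"
    and "n \<le> length q"
    and "length (chars p) = length (chars (take n q))"
    and "length (chars (take n q)) \<le> k"
    and "terms (p @ drop n q) \<in> Lprefix R S"
  shows "p @ drop n q \<in> \<P> R S Lex Sel D k u"
proof (rule Pk_append_admissible[OF assms(1,3) _ assms(8)], intro allI impI)
  fix i
  assume i: "i < length (drop n q)"
  have "length (chars (p @ take i (drop n q))) = length (chars (take (n + i) q))"
    using assms(6) by (simp add: take_add)
  moreover have "drop n q ! i = q ! (n + i)"
    using assms(5) by simp
  ultimately show "admissible R S Lex Sel D k u (length (chars (p @ take i (drop n q)))) (drop n q ! i)"
    using admissible_path_Pk[OF assms(1,4)] i unfolding admissible_path_def by auto
qed

end
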